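(* Let $\mathcal A$ be a Von Neumann algebra in $\mathcal L(\mathcal H)$ and $U:\mathcal H\to\bigoplus_i(\mathcal H_L^i\otimes\mathcal H_R^i)$ a representation unitary for $\mathcal A$. Then the map $\chi_U:\mathcal H\to(\bigoplus_i\mathcal H_L^i)\otimes(\bigoplus_i\mathcal H_R^i)$, $x\mapsto Ux$ (followed by the natural inclusion $\bigoplus_i(\mathcal H_L^i\otimes\mathcal H_R^i)\hookrightarrow(\bigoplus_i\mathcal H_L^i)\otimes(\bigoplus_i\mathcal H_R^i)$), is a splitting map such that $\mathrm{stloc}_L(\chi_U)=\mathrm{loc}_L(\chi_U)=\mathcal A$ and $\mathrm{stloc}_R(\chi_U)=\mathrm{loc}_R(\chi_U)=\mathcal A'$.
   Context: All Hilbert spaces are finite-dimensional and complex. A Von Neumann algebra in $\mathcal L(\mathcal H)$ is a $*$-subalgebra closed under adjoint containing $\mathbb 1_{\mathcal H}$; $\mathcal A'$ is its commutant in $\mathcal L(\mathcal H)$. A representation unitary for $\mathcal A$ is a unitary $U:\mathcal H\to\bigoplus_i(\mathcal H_L^i\otimes\mathcal H_R^i)$ with $U\mathcal AU^\dagger=\bigoplus_i\mathcal L(\mathcal H_L^i)\otimes\mathbb 1_{\mathcal H_R^i}$. A splitting map on $\mathcal H$ is an isometry $\chi:\mathcal H\to\mathcal H_L^\chi\otimes\mathcal H_R^\chi$. $A\in\mathcal L(\mathcal H)$ is left $\chi$-local if $A=\chi^\dagger(\tilde A\otimes\mathbb 1)\chi$ for some $\tilde A\in\mathcal L(\mathcal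 H_L^\chi)$, and strictly left $\chi$-local if there is $\tilde A\in\mathcal L(\mathcal H_L^\chi)$ with $A\chi^\dagger=\chi^\dagger(\tilde A\otimes\mathbb 1)$ and $\chi A=(\tilde A\otimes\mathbb 1)\chi$; the sets are $\mathrm{loc}_L(\chi)$, $\mathrm{stloc}_L(\chi)$. The right versions $\mathrm{loc}_R(\chi)$, $\mathrm{stloc}_R(\chi)$ are defined in the same way with $\mathbb 1\otimes\tilde A$ for $\tilde A\in\mathcal L(\mathcal H_R^\chi)$. *)

theory Defs
  imports Complex_Main "Jordan_Normal_Form.Matrix"
begin

text \<open>Finite-dimensional Hilbert spaces are modelled as \<open>\<complex>^n\<close> with the standard
inner product; operators are complex matrices of the corresponding size.\<close>

definition adj :: "complex mat \<Rightarrow> complex mat" where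
  "adj A = mat (dim_col A) (dim_row A) (\<lambda>(i,j). cnj (A $$ (j,i)))"

text \<open>Kronecker (tensor) product; basis vector (a,b) of the product has index a * dim2 + b.\<close>
definition kron :: "complex mat \<Rightarrow> complex mat \<Rightarrow> complex mat" where
  "kron A B = mat (dim_row A * dim_row B) (dim_col A * dim_col B)
     (\<lambda>(r,c). A $$ (r div dim_row B, c div dim_col B) * B $$ (r mod dim_row B, c mod dim_col B))"

definition msum :: "nat \<Rightarrow> nat \<Rightarrow> ('i \<Rightarrow> complex mat) \<Rightarrow> 'i set \<Rightarrow> complex mat" where
  "msum nr nc f I = mat nr nc (\<lambda>(r,c). \<Sum>i\<in>I. f i $$ (r,c))"

definition vN_algebra :: "nat \<Rightarrow> complex mat set \<Rightarrow> bool" where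
  "vN_algebra n \<A> \<longleftrightarrow> \<A> \<subseteq> carrier_mat n n \<and> 1\<^sub>m n \<in> \<A> \<and>
     (\<forall>A\<in>\<A>. \<forall>B\<in>\<A>. A + B \<in> \<A> \<and> A * B \<in> \<A>) \<and>
     (\<forall>c::complex. \<forall>A\<in>\<A>. c \<cdot>\<^sub>m A \<in> \<A>) \<and>
     (\<forall>A\<in>\<A>. adj A \<in> \<A>)"

definition commutant :: "nat \<Rightarrow> complex mat set \<Rightarrow> complex mat set" where
  "commutant n \<A> = {B \<in> carrier_mat n n. \<forall>A\<in>\<A>. A * B = B * A}"

text \<open>Direct sums: summands indexed by i < k with dimensions d i; summand i occupies
the indices off d i, ..., off d i + d i - 1.\<close>
definition off :: "(nat \<Rightarrow> nat) \<Rightarrow> nat \<Rightarrow> nat" where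
  "off d i = (\<Sum>j<i. d j)"

definition incl :: "nat \<Rightarrow> (nat \<Rightarrow> nat) \<Rightarrow> nat \<Rightarrow> complex mat" where
  "incl N d i = mat N (d i) (\<lambda>(r,c). if r = off d i + c then 1 else 0)"

definition blockdiag :: "nat \<Rightarrow> (nat \<Rightarrow> nat) \<Rightarrow> (nat \<Rightarrow> complex mat) \<Rightarrow> complex mat" where
  "blockdiag k d X = (let N = (\<Sum>i<k. d i) in
     msum N N (\<lambda>i. incl N d i * X i * adj (incl N d i)) {..<k})"

definition rep_unitary ::
  "nat \<Rightarrow> complex mat set \<Rightarrow> nat \<Rightarrow> (nat \<Rightarrow> nat) \<Rightarrow> (nat \<Rightarrow> nat) \<Rightarrow> complex mat \<Rightarrow> bool" where
  "rep_unitary n \<A> k dL dR U \<longleftrightarrow>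
     (let N = (\<Sum>i<k. dL i * dR i) in
       U \<in> carrier_mat N n \<and> adj U * U = 1\<^sub>m n \<and> U * adj U = 1\<^sub>m N \<and>
       (\<lambda>A. U * A * adj U) ` \<A> =
         {blockdiag k (\<lambda>i. dL i * dR i) (\<lambda>i. kron (T i) (1\<^sub>m (dR i))) | T.
            \<forall>i<k. T i \<in> carrier_mat (dL i) (dL i)})"

definition splitting_map :: "nat \<Rightarrow> nat \<Rightarrow> nat \<Rightarrow> complex mat \<Rightarrow> bool" where
  "splitting_map n nL nR \<chi> \<longleftrightarrow> \<chi> \<in> carrier_mat (nL * nR) n \<and> adj \<chi> * \<chi> = 1\<^sub>m n"

definition loc_L :: "nat \<Rightarrow> nat \<Rightarrow> nat \<Rightarrow> complex mat \<Rightarrow> complex mat set" where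
  "loc_L n nL nR \<chi> = {A \<in> carrier_mat n n. \<exists>T \<in> carrier_mat nL nL.
      A = adj \<chi> * kron T (1\<^sub>m nR) * \<chi>}"

definition stloc_L :: "nat \<Rightarrow> nat \<Rightarrow> nat \<Rightarrow> complex mat \<Rightarrow> complex mat set" where
  "stloc_L n nL nR \<chi> = {A \<in> carrier_mat n n. \<exists>T \<in> carrier_mat nL nL.
      A * adj \<chi> = adj \<chi> * kron T (1\<^sub>m nR) \<and> \<chi> * A = kron T (1\<^sub>m nR) * \<chi>}"

definition loc_R :: "nat \<Rightarrow> nat \<Rightarrow> nat \<Rightarrow> complex mat \<Rightarrow> complex mat set" where
  "loc_R n nL nR \<chi> = {A \<in> carrier_mat n n. \<exists>T \<in> carrier_mat nR nR.
      A = adj \<chi> * kron (1\<^sub>m nL) T * \<chi>}"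

definition stloc_R :: "nat \<Rightarrow> nat \<Rightarrow> nat \<Rightarrow> complex mat \<Rightarrow> complex mat set" where
  "stloc_R n nL nR \<chi> = {A \<in> carrier_mat n n. \<exists>T \<in> carrier_mat nR nR.
      A * adj \<chi> = adj \<chi> * kron (1\<^sub>m nL) T \<and> \<chi> * A = kron (1\<^sub>m nL) T * \<chi>}"

text \<open>Natural inclusion \<Oplus>_i (H_L^i \<otimes> H_R^i) \<hookrightarrow> (\<Oplus>_i H_L^i) \<otimes> (\<Oplus>_i H_R^i).\<close>
definition split_incl :: "nat \<Rightarrow> (nat \<Rightarrow> nat) \<Rightarrow> (nat \<Rightarrow> nat) \<Rightarrow> complex mat" where
  "split_incl k dL dR = (let DL = (\<Sum>i<k. dL i); DR = (\<Sum>i<k. dR i);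
      N = (\<Sum>i<k. dL i * dR i) in
     msum (DL * DR) N (\<lambda>i. kron (incl DL dL i) (incl DR dR i) * adj (incl N (\<lambda>j. dL j * dR j) i)) {..<k})"

definition chi_U :: "nat \<Rightarrow> (nat \<Rightarrow> nat) \<Rightarrow> (nat \<Rightarrow> nat) \<Rightarrow> complex mat \<Rightarrow> complex mat" where
  "chi_U k dL dR U = split_incl k dL dR * U"

end

theory Submission
  imports Defs
begin

text \<open>
  Write \<open>S\<close> for \<open>split_incl\<close>, so that \<open>\<chi> = S U\<close>. The matrix \<open>S\<close> sends the basis vector
  \<open>e\<^sub>a \<otimes> e\<^sub>r\<close> of the \<open>i\<close>-th summand \<open>H\<^sub>L\<^sup>i \<otimes> H\<^sub>R\<^sup>i\<close> to the basis vector \<open>e\<^bsub>i,a\<^esub> \<otimes> e\<^bsub>i,r\<^esub>\<close> of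
  \<open>(\<Oplus>\<^sub>i H\<^sub>L\<^sup>i) \<otimes> (\<Oplus>\<^sub>i H\<^sub>R\<^sup>i)\<close>. Hence \<open>S\<close>, and with it \<open>\<chi>\<close>, is an isometry, and
  \<open>\<chi> \<chi>\<^sup>\<dagger> = S S\<^sup>\<dagger>\<close> is the diagonal projection onto the positions whose two factors lie in
  the same summand. Compressing by \<open>S\<close> keeps the diagonal blocks,
  \<open>S\<^sup>\<dagger> (T \<otimes> 1) S = \<Oplus>\<^sub>i T\<^sub>i\<^sub>i \<otimes> 1\<close>, which by the defining property of \<open>U\<close> gives
  \<open>loc\<^sub>L(\<chi>) \<subseteq> \<A>\<close>. Conversely, if \<open>U A U\<^sup>\<dagger> = \<Oplus>\<^sub>i X\<^sub>i \<otimes> 1\<close>, then \<open>K = (\<Oplus>\<^sub>i X\<^sub>i) \<otimes> 1\<close>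
  commutes with that projection, and for any \<open>K\<close> commuting with \<open>\<chi> \<chi>\<^sup>\<dagger>\<close> the compression
  \<open>\<chi>\<^sup>\<dagger> K \<chi>\<close> is strictly local with witness \<open>K\<close>. On the right, strictly left-local operators
  commute with right-local ones, so \<open>loc\<^sub>R(\<chi>) \<subseteq> \<A>'\<close>; and the commutant of
  \<open>\<Oplus>\<^sub>i L(H\<^sub>L\<^sup>i) \<otimes> 1\<close> is \<open>\<Oplus>\<^sub>i 1 \<otimes> L(H\<^sub>R\<^sup>i)\<close>, which yields \<open>\<A>' \<subseteq> stloc\<^sub>R(\<chi>)\<close> as on
  the left. For an isometry, strict locality always implies locality.
\<close>

section \<open>Adjoints, Kronecker products and isometries\<close>

lemma adj_carrier [simp]: "A \<in> carrier_mat m n \<Longrightarrow> adj A \<in> carrier_mat n m"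
  by (auto simp: adj_def)

lemma adj_dim [simp]: "dim_row (adj A) = dim_col A" "dim_col (adj A) = dim_row A"
  by (simp_all add: adj_def)

lemma adj_mult:
  "A \<in> carrier_mat m l \<Longrightarrow> B \<in> carrier_mat l n \<Longrightarrow> adj (A * B) = adj B * adj A"
  by (rule eq_matI)
    (auto simp: adj_def index_mult_mat scalar_prod_def mult.commute intro!: sum.cong)

lemma index_mult_unit_col:
  fixes A B :: "'a :: comm_ring_1 mat"
  assumes "A \<in> carrier_mat m l" "B \<in> carrier_mat l n" "i < m" "j < n" "e < l"
    and "\<And>t. t < l \<Longrightarrow> B $$ (t, j) = (if t = e then 1 else 0)"
  shows "(A * B) $$ (i, j) = A $$ (i, e)"
proof -
  have "(A * B) $$ (i, j) = (\<Sum>t\<in>{0..<l}. A $$ (i, t) * B $$ (t, j))"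
    using assms by (auto simp: index_mult_mat scalar_prod_def intro!: sum.cong)
  also have "\<dots> = (\<Sum>t\<in>{0..<l}. if t = e then A $$ (i, t) else 0)"
    by (rule sum.cong) (use assms in auto)
  finally show ?thesis using \<open>e < l\<close> by simp
qed

lemma index_mult_unit_row:
  fixes A B :: "'a :: comm_ring_1 mat"
  assumes "A \<in> carrier_mat m l" "B \<in> carrier_mat l n" "i < m" "j < n" "e < l"
    and "\<And>t. t < l \<Longrightarrow> A $$ (i, t) = (if t = e then 1 else 0)"
  shows "(A * B) $$ (i, j) = B $$ (e, j)"
proof -
  have "(A * B) $$ (i, j) = (\<Sum>t\<in>{0..<l}. A $$ (i, t) * B $$ (t, j))"
    using assms by (auto simp: index_mult_mat scalar_prod_def intro!: sum.cong)
  also have "\<dots> = (\<Sum>t\<in>{0..<l}. if t = e then B $$ (t, j) else 0)"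
    by (rule sum.cong) (use assms in auto)
  finally show ?thesis using \<open>e < l\<close> by simp
qed

lemma mult_add_less_mult: "a < m \<Longrightarrow> b < n \<Longrightarrow> a * n + b < m * (n :: nat)"
proof -
  assume "a < m" "b < n"
  then have "a * n + b < Suc a * n" by simp
  also have "\<dots> \<le> m * n" using \<open>a < m\<close> by (intro mult_le_mono1) simp
  finally show ?thesis .
qed

lemma mult_add_inj:
  assumes "a * n + r = b * n + s" "r < n" "s < (n :: nat)"
  shows "a = b \<and> r = s"
proof -
  have "(a * n + r) div n = a" "(b * n + s) div n = b"
    and "(a * n + r) mod n = r" "(b * n + s) mod n = s"
    using assms(2,3) by simp_all
  then show ?thesis using assms(1) by metis
qed

lemma mult_add_eq_iff_div_mod:
  assumes "r < (n :: nat)"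
  shows "q = a * n + r \<longleftrightarrow> q div n = a \<and> q mod n = r"
proof
  show "q = a * n + r \<Longrightarrow> q div n = a \<and> q mod n = r" using assms by simp
  show "q div n = a \<and> q mod n = r \<Longrightarrow> q = a * n + r" using div_mult_mod_eq[of q n] by simp
qed

lemma sum_lessThan_mult: "(\<Sum>t<m * n. f t) = (\<Sum>a<m. \<Sum>b<n. f (a * n + b :: nat))"
proof -
  have "(\<Sum>t<m * n. f t) = (\<Sum>a<m. \<Sum>t\<in>{a * n..<a * n + n}. f t)"
    by (rule sum.nat_group[symmetric])
  also have "\<dots> = (\<Sum>a<m. \<Sum>b<n. f (a * n + b))"
    by (rule sum.cong[OF refl])
      (simp add: sum.shift_bounds_nat_ivl[of f 0 "_ * n" n, simplified]
        lessThan_atLeast0 add.commute)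
  finally show ?thesis .
qed

lemma kron_carrier [simp]: "kron A B \<in> carrier_mat (dim_row A * dim_row B) (dim_col A * dim_col B)"
  by (simp add: kron_def)

lemma kron_dim [simp]:
  "dim_row (kron A B) = dim_row A * dim_row B" "dim_col (kron A B) = dim_col A * dim_col B"
  by (simp_all add: kron_def)

lemma kron_index:
  assumes "A \<in> carrier_mat m1 n1" "B \<in> carrier_mat m2 n2"
    and "a < m1" "b < n1" "r < m2" "s < n2"
  shows "kron A B $$ (a * m2 + r, b * n2 + s) = A $$ (a, b) * B $$ (r, s)"
  using assms by (simp add: kron_def mult_add_less_mult)

lemma mult_kron:
  assumes A: "A \<in> carrier_mat m1 l1" and B: "B \<in> carrier_mat m2 l2"
    and C: "C \<in> carrier_mat l1 n1" and D: "D \<in> carrier_mat l2 n2"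
  shows "kron A B * kron C D = kron (A * C) (B * D)"
proof (rule eq_matI)
  fix q q' assume "q < dim_row (kron (A * C) (B * D))" "q' < dim_col (kron (A * C) (B * D))"
  then have q: "q < m1 * m2" and q': "q' < n1 * n2" using A B C D by auto
  define x y x' y' where "x = q div m2" and "y = q mod m2" and "x' = q' div n2" and "y' = q' mod n2"
  have bounds: "x < m1" "y < m2" "x' < n1" "y' < n2"
    using q q' unfolding x_def y_def x'_def y'_def
    by (auto simp: less_mult_imp_div_less intro!: mod_less_divisor gr0I)
  have "(kron A B * kron C D) $$ (q, q') =
      (\<Sum>t<l1 * l2. kron A B $$ (q, t) * kron C D $$ (t, q'))"
    using q q' A B C D by (simp add: index_mult_mat scalar_prod_def lessThan_atLeast0)
  also have "\<dots> = (\<Sum>a<l1. \<Sum>b<l2. (A $$ (x, a) * C $$ (a, x')) * (B $$ (y, b) * D $$ (b, y')))"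
    unfolding sum_lessThan_mult using q q' A B C D mult_add_less_mult
    by (intro sum.cong refl) (auto simp: kron_def x_def y_def x'_def y'_def algebra_simps)
  also have "\<dots> = (A * C) $$ (x, x') * (B * D) $$ (y, y')"
    using bounds A B C D by (simp add: index_mult_mat scalar_prod_def lessThan_atLeast0 sum_product)
  also have "\<dots> = kron (A * C) (B * D) $$ (q, q')"
    using q q' A B C D by (simp add: kron_def x_def y_def x'_def y'_def)
  finally show "(kron A B * kron C D) $$ (q, q') = kron (A * C) (B * D) $$ (q, q')" .
qed (use A B C D in auto)

lemma kron_one_commute:
  assumes "T \<in> carrier_mat m1 m1" "R \<in> carrier_mat m2 m2"
  shows "kron T (1\<^sub>m m2) * kron (1\<^sub>m m1) R = kron (1\<^sub>m m1) R * kron T (1\<^sub>m m2)"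
  using assms by (simp add: mult_kron[of _ m1 m1 _ m2 m2 _ m1 _ m2])

lemma isometry_compression_intertwines:
  assumes X: "X \<in> carrier_mat m n" and iso: "adj X * X = 1\<^sub>m n" and K: "K \<in> carrier_mat m m"
    and comm: "K * (X * adj X) = (X * adj X) * K"
  shows "X * (adj X * K * X) = K * X" and "(adj X * K * X) * adj X = adj X * K"
proof -
  have aX: "adj X \<in> carrier_mat n m" using X by simp
  have "X * (adj X * K * X) = (X * adj X) * K * X"
    by (simp add: assoc_mult_mat[OF X mult_carrier_mat[OF aX K] X] assoc_mult_mat[OF X aX K])
  also have "\<dots> = K * (X * adj X) * X" using comm by simp
  also have "\<dots> = K * (X * (adj X * X))"
    by (simp add: assoc_mult_mat[OF K mult_carrier_mat[OF X aX] X] assoc_mult_mat[OF X aX X])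
  finally show "X * (adj X * K * X) = K * X" using iso X K by simp
  have "(adj X * K * X) * adj X = adj X * (K * (X * adj X))"
    by (simp add: assoc_mult_mat[OF mult_carrier_mat[OF aX K] X aX] assoc_mult_mat[OF aX K X]
        assoc_mult_mat[OF aX mult_carrier_mat[OF K X] aX] assoc_mult_mat[OF K X aX])
  also have "\<dots> = adj X * ((X * adj X) * K)" using comm by simp
  also have "\<dots> = ((adj X * X) * adj X) * K"
    by (simp add: assoc_mult_mat[OF aX mult_carrier_mat[OF X aX] K] assoc_mult_mat[OF aX X aX]
        assoc_mult_mat[OF mult_carrier_mat[OF aX X] aX K]
        assoc_mult_mat[OF aX X mult_carrier_mat[OF aX K]])
  finally show "(adj X * K * X) * adj X = adj X * K" using iso X aX by simp
qed

lemma isometry_strictly_local_imp_local: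
  assumes X: "X \<in> carrier_mat m n" "adj X * X = 1\<^sub>m n" and A: "A \<in> carrier_mat n n"
    and intertw: "A * adj X = adj X * K"
  shows "A = adj X * K * X"
proof -
  have "A = A * (adj X * X)" using A X by simp
  also have "\<dots> = (A * adj X) * X" using assoc_mult_mat[OF A adj_carrier[OF X(1)] X(1)] by simp
  finally show ?thesis using intertw by simp
qed

lemma strictly_local_commute:
  assumes X: "X \<in> carrier_mat m n" and A: "A \<in> carrier_mat n n"
    and K: "K \<in> carrier_mat m m" and L: "L \<in> carrier_mat m m"
    and right: "A * adj X = adj X * K" and left: "X * A = K * X" and KL: "K * L = L * K"
  shows "A * (adj X * L * X) = (adj X * L * X) * A"
proof -
  have aX: "adj X \<in> carrier_mat n m" using X by simp
  have "A * (adj X * L * X) = (A * adj X) * L * X"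
    by (simp add: assoc_mult_mat[OF A aX L] assoc_mult_mat[OF A mult_carrier_mat[OF aX L] X]
        assoc_mult_mat[OF mult_carrier_mat[OF A aX] L X])
  also have "\<dots> = adj X * (K * L) * X"
    by (simp add: right assoc_mult_mat[OF aX K L])
  also have "\<dots> = adj X * L * (K * X)"
    by (simp add: KL assoc_mult_mat[OF aX mult_carrier_mat[OF L K] X] assoc_mult_mat[OF L K X]
        assoc_mult_mat[OF aX L mult_carrier_mat[OF K X]])
  also have "\<dots> = (adj X * L * X) * A"
    by (simp add: left[symmetric] assoc_mult_mat[OF mult_carrier_mat[OF aX L] X A])
  finally show ?thesis .
qed

lemma unitary_conj_cancel:
  assumes U: "U \<in> carrier_mat N n" "adj U * U = 1\<^sub>m n" and A: "A \<in> carrier_mat n n"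
  shows "adj U * (U * A * adj U) * U = A"
proof -
  have aU: "adj U \<in> carrier_mat n N" using U by simp
  have "adj U * (U * A * adj U) * U = adj U * (U * A) * adj U * U"
    using assoc_mult_mat[OF aU mult_carrier_mat[OF U(1) A] aU] by simp
  also have "\<dots> = (adj U * U) * A * adj U * U" using assoc_mult_mat[OF aU U(1) A] by simp
  also have "\<dots> = A * (adj U * U)" using assoc_mult_mat[OF A aU U(1)] U A by simp
  finally show ?thesis using U A by simp
qed

lemma unitary_conj_mult:
  assumes U: "U \<in> carrier_mat N n" "adj U * U = 1\<^sub>m n"
    and P: "P \<in> carrier_mat n n" and Q: "Q \<in> carrier_mat n n"
  shows "(U * P * adj U) * (U * Q * adj U) = U * (P * Q) * adj U"
proof -
  have aU: "adj U \<in> carrier_mat n N" using U by simp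
  have UP: "U * P \<in> carrier_mat N n" and UQ: "U * Q \<in> carrier_mat N n" using U P Q by auto
  have "adj U * (U * Q * adj U) = adj U * (U * Q) * adj U" using assoc_mult_mat[OF aU UQ aU] by simp
  also have "\<dots> = (adj U * U) * Q * adj U" using assoc_mult_mat[OF aU U(1) Q] by simp
  finally have cancel: "adj U * (U * Q * adj U) = Q * adj U" using U Q by simp
  have "(U * P * adj U) * (U * Q * adj U) = U * P * (adj U * (U * Q * adj U))"
    using assoc_mult_mat[OF UP aU mult_carrier_mat[OF UQ aU]] by simp
  also have "\<dots> = U * P * Q * adj U" unfolding cancel using assoc_mult_mat[OF UP Q aU] by simp
  finally show ?thesis using assoc_mult_mat[OF U(1) P Q] by simp
qed

lemma stloc_L_subset_loc_L:
  assumes "splitting_map n nL nR X"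
  shows "stloc_L n nL nR X \<subseteq> loc_L n nL nR X"
proof
  fix A assume "A \<in> stloc_L n nL nR X"
  then obtain T where A: "A \<in> carrier_mat n n" and T: "T \<in> carrier_mat nL nL"
    and "A * adj X = adj X * kron T (1\<^sub>m nR)"
    unfolding stloc_L_def by blast
  with assms have "A = adj X * kron T (1\<^sub>m nR) * X"
    unfolding splitting_map_def by (blast intro: isometry_strictly_local_imp_local)
  then show "A \<in> loc_L n nL nR X" unfolding loc_L_def using A T by blast
qed

lemma stloc_R_subset_loc_R:
  assumes "splitting_map n nL nR X"
  shows "stloc_R n nL nR X \<subseteq> loc_R n nL nR X"
proof
  fix A assume "A \<in> stloc_R n nL nR X"
  then obtain T where A: "A \<in> carrier_mat n n" and T: "T \<in> carrier_mat nR nR"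
    and "A * adj X = adj X * kron (1\<^sub>m nL) T"
    unfolding stloc_R_def by blast
  with assms have "A = adj X * kron (1\<^sub>m nL) T * X"
    unfolding splitting_map_def by (blast intro: isometry_strictly_local_imp_local)
  then show "A \<in> loc_R n nL nR X" unfolding loc_R_def using A T by blast
qed

section \<open>Direct sums and block-diagonal matrices\<close>

lemma off_Suc: "off d (Suc i) = off d i + d i"
  by (simp add: off_def)

lemma off_add_le_off: "i < j \<Longrightarrow> off d i + d i \<le> off d j"
proof (induction j)
  case (Suc j)
  then show ?case by (cases "i = j") (auto simp: off_Suc)
qed simp

lemma off_add_less_off: "i < k \<Longrightarrow> c < d i \<Longrightarrow> off d i + c < off d k"
  using off_add_le_off[of i k d] by simp

lemma off_add_inj:
  assumes "off d i + c = off d j + c'" "c < d i" "c' < d j"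
  shows "i = j \<and> c = c'"
proof -
  have "\<not> i < j" "\<not> j < i"
    using assms off_add_le_off[of i j d] off_add_le_off[of j i d] by auto
  then show ?thesis using assms by simp
qed

lemma off_add_in_summand_iff:
  assumes "c < d i"
  shows "off d l \<le> off d i + c \<and> off d i + c < off d l + d l \<longleftrightarrow> l = i"
  using assms off_add_inj[of d l "off d i + c - off d l" i c] by auto

lemma less_off_cases: "p < off d k \<Longrightarrow> \<exists>i<k. \<exists>c<d i. p = off d i + c"
proof (induction k)
  case (Suc k)
  show ?case
  proof (cases "p < off d k")
    case True
    then show ?thesis using Suc.IH by (meson less_SucI)
  next
    case False
    then show ?thesis using Suc.prems
      by (intro exI[of _ k]) (auto simp: off_Suc intro!: exI[of _ "p - off d k"])
  qed
qed (simp add: off_def)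

lemma incl_carrier [simp]: "incl N d i \<in> carrier_mat N (d i)"
  by (simp add: incl_def)

lemma incl_dim [simp]: "dim_row (incl N d i) = N" "dim_col (incl N d i) = d i"
  by (simp_all add: incl_def)

lemma incl_mult_index:
  assumes "X \<in> carrier_mat (d i) m" "p < N" "c < m"
  shows "(incl N d i * X) $$ (p, c) =
    (if off d i \<le> p \<and> p < off d i + d i then X $$ (p - off d i, c) else 0)"
proof (cases "off d i \<le> p \<and> p < off d i + d i")
  case True
  then show ?thesis using assms
    by (subst index_mult_unit_row[where e = "p - off d i"]) (auto simp: incl_def)
next
  case False
  then have "\<And>t. t < d i \<Longrightarrow> incl N d i $$ (p, t) = 0"
    using assms by (auto simp: incl_def)
  then show ?thesis using False assms
    by (auto simp: index_mult_mat scalar_prod_def intro!: sum.neutral)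
qed

lemma mult_adj_incl_index:
  assumes "X \<in> carrier_mat m (d i)" "p < N" "c < m"
  shows "(X * adj (incl N d i)) $$ (c, p) =
    (if off d i \<le> p \<and> p < off d i + d i then X $$ (c, p - off d i) else 0)"
proof (cases "off d i \<le> p \<and> p < off d i + d i")
  case True
  then show ?thesis using assms
    by (subst index_mult_unit_col[where e = "p - off d i"]) (auto simp: incl_def adj_def)
next
  case False
  then have "\<And>t. t < d i \<Longrightarrow> adj (incl N d i) $$ (t, p) = 0"
    using assms by (auto simp: incl_def adj_def)
  then show ?thesis using False assms
    by (auto simp: index_mult_mat scalar_prod_def intro!: sum.neutral)
qed

lemma blockdiag_carrier [simp]: "blockdiag k d Z \<in> carrier_mat (off d k) (off d k)"
  by (simp add: blockdiag_def msum_def off_def Let_def)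

lemma blockdiag_dim [simp]:
  "dim_row (blockdiag k d Z) = off d k" "dim_col (blockdiag k d Z) = off d k"
  by (simp_all add: blockdiag_def msum_def off_def Let_def)

lemma blockdiag_cong: "(\<And>i. i < k \<Longrightarrow> Z i = Z' i) \<Longrightarrow> blockdiag k d Z = blockdiag k d Z'"
  unfolding blockdiag_def msum_def Let_def by (auto intro!: cong_mat sum.cong)

lemma blockdiag_index:
  assumes Z: "\<And>i. i < k \<Longrightarrow> Z i \<in> carrier_mat (d i) (d i)"
    and ij: "i < k" "j < k" "c < d i" "c' < d j"
  shows "blockdiag k d Z $$ (off d i + c, off d j + c') = (if i = j then Z i $$ (c, c') else 0)"
proof -
  let ?N = "off d k"
  have pos: "off d i + c < ?N" "off d j + c' < ?N" using ij off_add_less_off by auto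
  have "blockdiag k d Z $$ (off d i + c, off d j + c') =
      (\<Sum>l<k. (incl ?N d l * Z l * adj (incl ?N d l)) $$ (off d i + c, off d j + c'))"
    using pos by (simp add: blockdiag_def msum_def off_def Let_def)
  also have "\<dots> = (\<Sum>l<k. if l = i then if i = j then Z i $$ (c, c') else 0 else 0)"
  proof (rule sum.cong[OF refl])
    fix l assume "l \<in> {..<k}"
    then have Zl: "Z l \<in> carrier_mat (d l) (d l)" using Z by simp
    have row: "(incl ?N d l * Z l) $$ (off d i + c, c'') = (if l = i then Z l $$ (c, c'') else 0)"
      if "c'' < d l" for c''
      using incl_mult_index[where d = d and i = l, OF Zl pos(1) that]
        off_add_in_summand_iff[of c d i l] ij by simp
    have "(incl ?N d l * Z l * adj (incl ?N d l)) $$ (off d i + c, off d j + c') =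
        (if l = j then (incl ?N d l * Z l) $$ (off d i + c, c') else 0)"
      using mult_adj_incl_index[where d = d and i = l,
          OF mult_carrier_mat[OF incl_carrier[of ?N d l] Zl] pos(2) pos(1)]
        off_add_in_summand_iff[of c' d j l] ij by simp
    then show "(incl ?N d l * Z l * adj (incl ?N d l)) $$ (off d i + c, off d j + c') =
        (if l = i then if i = j then Z i $$ (c, c') else 0 else 0)"
      using row ij by auto
  qed
  also have "\<dots> = (if i = j then Z i $$ (c, c') else 0)" using ij by simp
  finally show ?thesis .
qed

definition block_diagonal :: "nat \<Rightarrow> (nat \<Rightarrow> nat) \<Rightarrow> complex mat \<Rightarrow> bool" where
  "block_diagonal k d A \<longleftrightarrow>
     (\<forall>i<k. \<forall>j<k. i \<noteq> j \<longrightarrow> (\<forall>c<d i. \<forall>c'<d j. A $$ (off d i + c, off d j + c') = 0))"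

lemma block_diagonal_blockdiag:
  "(\<And>i. i < k \<Longrightarrow> Z i \<in> carrier_mat (d i) (d i)) \<Longrightarrow> block_diagonal k d (blockdiag k d Z)"
  by (simp add: block_diagonal_def blockdiag_index)

lemma block_diagonal_one: "block_diagonal k d (1\<^sub>m (off d k))"
  unfolding block_diagonal_def
proof (intro allI impI)
  fix i j c c' assume "i < k" "j < k" "i \<noteq> j" "c < d i" "c' < d j"
  then have "off d i + c \<noteq> off d j + c'" using off_add_inj[of d i c j c'] by auto
  then show "1\<^sub>m (off d k) $$ (off d i + c, off d j + c') = 0"
    using \<open>i < k\<close> \<open>j < k\<close> \<open>c < d i\<close> \<open>c' < d j\<close> off_add_less_off[of _ k _ d] by simp
qed

definition diag_block :: "(nat \<Rightarrow> nat) \<Rightarrow> complex mat \<Rightarrow> nat \<Rightarrow> complex mat" where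
  "diag_block d A i = mat (d i) (d i) (\<lambda>(c, c'). A $$ (off d i + c, off d i + c'))"

lemma diag_block_blockdiag:
  assumes Z: "\<And>i. i < k \<Longrightarrow> Z i \<in> carrier_mat (d i) (d i)" and i: "i < k"
  shows "diag_block d (blockdiag k d Z) i = Z i"
  by (rule eq_matI) (use Z[OF i] i in \<open>auto simp: diag_block_def blockdiag_index[OF Z]\<close>)

lemma diag_block_one: "i < k \<Longrightarrow> diag_block d (1\<^sub>m (off d k)) i = 1\<^sub>m (d i)"
  by (rule eq_matI) (simp_all add: diag_block_def off_add_less_off)

section \<open>Matrices sending basis vectors to basis vectors\<close>

lemma commute_mat_diag_indicator:
  fixes K :: "'a :: comm_ring_1 mat"
  assumes K: "K \<in> carrier_mat m m"
    and respects: "\<And>q q'. q < m \<Longrightarrow> q' < m \<Longrightarrow> K $$ (q, q') \<noteq> 0 \<Longrightarrow> q \<in> P \<longleftrightarrow> q' \<in> P"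
  shows "K * mat_diag m (\<lambda>q. if q \<in> P then 1 else 0) =
    mat_diag m (\<lambda>q. if q \<in> P then 1 else 0) * K"
  unfolding mat_diag_mult_left[OF K] mat_diag_mult_right[OF K]
  by (rule eq_matI) (use K respects in \<open>auto simp: mult.commute\<close>)

locale basis_embedding =
  fixes S :: "complex mat" and I :: "'x set" and f g :: "'x \<Rightarrow> nat"
  assumes col_bij: "bij_betw g I {..<dim_col S}"
    and row_inj: "inj_on f I"
    and row_range: "f ` I \<subseteq> {..<dim_row S}"
    and index_col: "\<And>x q. x \<in> I \<Longrightarrow> q < dim_row S \<Longrightarrow> S $$ (q, g x) = (if q = f x then 1 else 0)"
begin

lemma col_less: "x \<in> I \<Longrightarrow> g x < dim_col S"
  using col_bij by (auto simp: bij_betw_def)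

lemma row_less: "x \<in> I \<Longrightarrow> f x < dim_row S"
  using row_range by auto

lemma col_inj: "x \<in> I \<Longrightarrow> y \<in> I \<Longrightarrow> g x = g y \<longleftrightarrow> x = y"
  using col_bij by (auto simp: bij_betw_def inj_on_def)

lemma col_cases: "p < dim_col S \<Longrightarrow> \<exists>x\<in>I. p = g x"
  using col_bij by (metis bij_betw_inv_into_right bij_betw_imp_surj_on inv_into_into lessThan_iff)

lemma mult_index_col:
  assumes "M \<in> carrier_mat l (dim_row S)" "q < l" "x \<in> I"
  shows "(M * S) $$ (q, g x) = M $$ (q, f x)"
  using assms row_less col_less index_col by (intro index_mult_unit_col[OF _ carrier_mat_triv]) auto

lemma adj_mult_index_row:
  assumes "M \<in> carrier_mat (dim_row S) l" "q < l" "x \<in> I"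
  shows "(adj S * M) $$ (g x, q) = M $$ (f x, q)"
proof (rule index_mult_unit_row[OF adj_carrier[OF carrier_mat_triv] assms(1)])
  show "g x < dim_col S" using col_less \<open>x \<in> I\<close> .
  fix t assume "t < dim_row S"
  then show "adj S $$ (g x, t) = (if t = f x then 1 else 0)"
    using \<open>g x < dim_col S\<close> index_col[OF \<open>x \<in> I\<close>] by (simp add: adj_def)
qed (use assms row_less in auto)

lemma compress_index:
  assumes "M \<in> carrier_mat (dim_row S) (dim_row S)" "x \<in> I" "y \<in> I"
  shows "(adj S * M * S) $$ (g x, g y) = M $$ (f x, f y)"
proof -
  have "(adj S * M * S) $$ (g x, g y) = (adj S * M) $$ (g x, f y)"
    by (rule mult_index_col) (use assms col_less in auto)
  also have "\<dots> = M $$ (f x, f y)"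
    by (rule adj_mult_index_row) (use assms row_less in auto)
  finally show ?thesis .
qed

lemma eq_matI_on_basis:
  assumes "A \<in> carrier_mat (dim_col S) (dim_col S)" "B \<in> carrier_mat (dim_col S) (dim_col S)"
    and "\<And>x y. x \<in> I \<Longrightarrow> y \<in> I \<Longrightarrow> A $$ (g x, g y) = B $$ (g x, g y)"
  shows "A = B"
  by (rule eq_matI) (use assms col_cases in \<open>auto, metis\<close>)

lemma isometry: "adj S * S = 1\<^sub>m (dim_col S)"
proof (rule eq_matI_on_basis)
  fix x y assume "x \<in> I" "y \<in> I"
  have "(adj S * S) $$ (g x, g y) = S $$ (f x, g y)"
    by (rule adj_mult_index_row) (use \<open>x \<in> I\<close> \<open>y \<in> I\<close> col_less in auto)
  also have "\<dots> = 1\<^sub>m (dim_col S) $$ (g x, g y)"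
    using \<open>x \<in> I\<close> \<open>y \<in> I\<close> row_less col_less col_inj index_col row_inj
    by (auto simp: inj_on_def)
  finally show "(adj S * S) $$ (g x, g y) = 1\<^sub>m (dim_col S) $$ (g x, g y)" .
qed auto

lemma range_projection:
  "S * adj S = mat_diag (dim_row S) (\<lambda>q. if q \<in> f ` I then 1 else 0)" (is "_ = ?D")
proof (rule eq_matI)
  fix q q' assume "q < dim_row ?D" "q' < dim_col ?D"
  then have q: "q < dim_row S" and q': "q' < dim_row S" by (auto simp: mat_diag_def)
  have fin: "finite I" using col_bij bij_betw_finite by blast
  have "(S * adj S) $$ (q, q') = (\<Sum>p<dim_col S. S $$ (q, p) * cnj (S $$ (q', p)))"
    using q q' by (simp add: index_mult_mat scalar_prod_def adj_def lessThan_atLeast0)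
  also have "\<dots> = (\<Sum>x\<in>I. S $$ (q, g x) * cnj (S $$ (q', g x)))"
    by (rule sum.reindex_bij_betw[OF col_bij, symmetric])
  also have "\<dots> = (\<Sum>x\<in>I. if f x = q then (if q = q' then 1 else 0) else 0)"
    using q q' index_col by (intro sum.cong) auto
  also have "\<dots> = (\<Sum>y\<in>f ` I. if y = q then (if q = q' then 1 else 0) else 0)"
    by (rule sum.reindex[OF row_inj, symmetric, unfolded comp_def])
  also have "\<dots> = ?D $$ (q, q')"
    using fin q q' by (simp add: mat_diag_def)
  finally show "(S * adj S) $$ (q, q') = ?D $$ (q, q')" .
qed (auto simp: mat_diag_def)

end

section \<open>The inclusion of a sum of tensor products into the tensor product of the sums\<close>

definition summand_basis :: "nat \<Rightarrow> (nat \<Rightarrow> nat) \<Rightarrow> (nat \<Rightarrow> nat) \<Rightarrow> (nat \<times> nat \<times> nat) set" where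
  "summand_basis k dL dR = {(i, a, r). i < k \<and> a < dL i \<and> r < dR i}"

text \<open>The positions of the basis vector \<open>e\<^sub>a \<otimes> e\<^sub>r\<close> of \<open>H\<^sub>L\<^sup>i \<otimes> H\<^sub>R\<^sup>i\<close> in
  \<open>\<Oplus>\<^sub>i (H\<^sub>L\<^sup>i \<otimes> H\<^sub>R\<^sup>i)\<close> and in \<open>(\<Oplus>\<^sub>i H\<^sub>L\<^sup>i) \<otimes> (\<Oplus>\<^sub>i H\<^sub>R\<^sup>i)\<close>.\<close>

definition sum_tensor_pos :: "(nat \<Rightarrow> nat) \<Rightarrow> (nat \<Rightarrow> nat) \<Rightarrow> nat \<times> nat \<times> nat \<Rightarrow> nat" where
  "sum_tensor_pos dL dR = (\<lambda>(i, a, r). off (\<lambda>j. dL j * dR j) i + (a * dR i + r))"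

definition tensor_sum_pos :: "nat \<Rightarrow> (nat \<Rightarrow> nat) \<Rightarrow> (nat \<Rightarrow> nat) \<Rightarrow> nat \<times> nat \<times> nat \<Rightarrow> nat" where
  "tensor_sum_pos k dL dR = (\<lambda>(i, a, r). (off dL i + a) * off dR k + (off dR i + r))"

lemma bij_betw_sum_tensor_pos:
  "bij_betw (sum_tensor_pos dL dR) (summand_basis k dL dR) {..<off (\<lambda>j. dL j * dR j) k}"
proof (rule bij_betw_imageI)
  show "inj_on (sum_tensor_pos dL dR) (summand_basis k dL dR)"
  proof (rule inj_onI, clarsimp simp: summand_basis_def sum_tensor_pos_def)
    fix i a r j b s
    assume eq: "off (\<lambda>j. dL j * dR j) i + (a * dR i + r) = off (\<lambda>j. dL j * dR j) j + (b * dR j + s)"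
      and "a < dL i" "r < dR i" "b < dL j" "s < dR j"
    then have "i = j \<and> a * dR i + r = b * dR j + s"
      using off_add_inj[OF eq] mult_add_less_mult by simp
    then show "i = j \<and> a = b \<and> r = s" using mult_add_inj \<open>r < dR i\<close> \<open>s < dR j\<close> by metis
  qed
  show "sum_tensor_pos dL dR ` summand_basis k dL dR = {..<off (\<lambda>j. dL j * dR j) k}"
  proof (intro equalityI subsetI)
    fix p assume "p \<in> sum_tensor_pos dL dR ` summand_basis k dL dR"
    then show "p \<in> {..<off (\<lambda>j. dL j * dR j) k}"
      by (auto simp: summand_basis_def sum_tensor_pos_def
        intro!: off_add_less_off mult_add_less_mult)
  next
    fix p assume "p \<in> {..<off (\<lambda>j. dL j * dR j) k}"
    then obtain i c where i: "i < k" "c < dL i * dR i" "p = off (\<lambda>j. dL j * dR j) i + c"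
      using less_off_cases by blast
    then have "c div dR i < dL i" "c mod dR i < dR i" "c = c div dR i * dR i + c mod dR i"
      by (auto simp: less_mult_imp_div_less intro!: mod_less_divisor gr0I)
    then have "(i, c div dR i, c mod dR i) \<in> summand_basis k dL dR"
      and "p = sum_tensor_pos dL dR (i, c div dR i, c mod dR i)"
      using i by (simp_all add: summand_basis_def sum_tensor_pos_def)
    then show "p \<in> sum_tensor_pos dL dR ` summand_basis k dL dR" by blast
  qed
qed

lemma sum_tensor_pos_cases:
  assumes "p < off (\<lambda>j. dL j * dR j) k"
  obtains x where "x \<in> summand_basis k dL dR" "p = sum_tensor_pos dL dR x"
proof -
  have "p \<in> sum_tensor_pos dL dR ` summand_basis k dL dR"
    using bij_betw_sum_tensor_pos[of dL dR k] assms unfolding bij_betw_def by auto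
  then show ?thesis using that by blast
qed

lemma tensor_sum_pos_less:
  "x \<in> summand_basis k dL dR \<Longrightarrow> tensor_sum_pos k dL dR x < off dL k * off dR k"
  by (auto simp: summand_basis_def tensor_sum_pos_def intro!: mult_add_less_mult off_add_less_off)

lemma tensor_sum_pos_eq_iff:
  assumes "i < k" "j < k" "a < dL i" "r < dR i" "b < dL j" "s < dR j"
  shows "tensor_sum_pos k dL dR (i, a, r) = tensor_sum_pos k dL dR (j, b, s) \<longleftrightarrow>
    (i, a, r) = (j, b, s)"
  using assms
    mult_add_inj[of "off dL i + a" "off dR k" "off dR i + r" "off dL j + b" "off dR j + s"]
    off_add_less_off[of i k r dR] off_add_less_off[of j k s dR] off_add_inj[of dL i a j b]
    off_add_inj[of dR i r j s]
  by (auto simp: tensor_sum_pos_def)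

lemma inj_on_tensor_sum_pos: "inj_on (tensor_sum_pos k dL dR) (summand_basis k dL dR)"
  by (auto simp: inj_on_def summand_basis_def tensor_sum_pos_eq_iff)

lemma tensor_pos_cases:
  assumes "q < off dL k * off dR k"
  obtains i a j r where "i < k" "a < dL i" "j < k" "r < dR j"
    and "q = (off dL i + a) * off dR k + (off dR j + r)"
proof -
  have "q div off dR k < off dL k" "q mod off dR k < off dR k"
    using assms by (auto simp: less_mult_imp_div_less intro!: mod_less_divisor gr0I)
  then obtain i a j r where "i < k" "a < dL i" "q div off dR k = off dL i + a"
    and "j < k" "r < dR j" "q mod off dR k = off dR j + r"
    using less_off_cases by metis
  then show ?thesis using that div_mult_mod_eq[of q "off dR k"] by metis
qed

lemma tensor_pos_mem_split_range_iff:
  assumes "i < k" "a < dL i" "j < k" "r < dR j"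
  shows "(off dL i + a) * off dR k + (off dR j + r) \<in> tensor_sum_pos k dL dR ` summand_basis k dL dR
    \<longleftrightarrow> i = j" (is "?q \<in> ?P \<longleftrightarrow> _")
proof
  assume "i = j"
  then show "?q \<in> ?P" using assms by (force simp: tensor_sum_pos_def summand_basis_def)
next
  assume "?q \<in> ?P"
  then obtain l b s where l: "l < k" "b < dL l" "s < dR l"
    and eq: "?q = (off dL l + b) * off dR k + (off dR l + s)"
    by (auto simp: tensor_sum_pos_def summand_basis_def)
  have "off dL i + a = off dL l + b \<and> off dR j + r = off dR l + s"
    using mult_add_inj[OF eq off_add_less_off[of j k r dR] off_add_less_off[of l k s dR]] assms l
    by simp
  then show "i = j"
    using off_add_inj[of dL i a l b] off_add_inj[of dR j r l s] assms l by simp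
qed

lemma split_incl_dim [simp]:
  "dim_row (split_incl k dL dR) = off dL k * off dR k"
  "dim_col (split_incl k dL dR) = off (\<lambda>j. dL j * dR j) k"
  by (simp_all add: split_incl_def msum_def off_def Let_def)

lemma split_incl_carrier [simp]:
  "split_incl k dL dR \<in> carrier_mat (off dL k * off dR k) (off (\<lambda>j. dL j * dR j) k)"
  unfolding carrier_mat_def by simp

lemma split_incl_index:
  assumes q: "q < off dL k * off dR k" and x: "(i, a, r) \<in> summand_basis k dL dR"
  shows "split_incl k dL dR $$ (q, sum_tensor_pos dL dR (i, a, r)) =
    (if q = tensor_sum_pos k dL dR (i, a, r) then 1 else 0)"
proof -
  let ?d = "\<lambda>j. dL j * dR j" and ?DL = "off dL k" and ?DR = "off dR k"
  let ?M = "\<lambda>j. kron (incl ?DL dL j) (incl ?DR dR j)"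
  have i: "i < k" "a < dL i" "r < dR i" using x by (auto simp: summand_basis_def)
  have c: "a * dR i + r < ?d i" using i mult_add_less_mult by simp
  have p: "off ?d i + (a * dR i + r) < off ?d k" using off_add_less_off[of i k _ ?d] i(1) c .
  have "split_incl k dL dR $$ (q, sum_tensor_pos dL dR (i, a, r)) =
      (\<Sum>l<k. (?M l * adj (incl (off ?d k) ?d l)) $$ (q, off ?d i + (a * dR i + r)))"
    using q p by (simp add: split_incl_def msum_def off_def[symmetric] Let_def sum_tensor_pos_def)
  also have "\<dots> = (\<Sum>l<k. if l = i then ?M i $$ (q, a * dR i + r) else 0)"
  proof (rule sum.cong[OF refl])
    fix l assume "l \<in> {..<k}"
    have "?M l \<in> carrier_mat (?DL * ?DR) (?d l)"
      using kron_carrier[of "incl ?DL dL l" "incl ?DR dR l"] by simp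
    from mult_adj_incl_index[where d = ?d and i = l, OF this p q]
    show "(?M l * adj (incl (off ?d k) ?d l)) $$ (q, off ?d i + (a * dR i + r)) =
        (if l = i then ?M i $$ (q, a * dR i + r) else 0)"
      using off_add_in_summand_iff[where d = ?d and i = i, OF c, of l] by auto
  qed
  also have "\<dots> = ?M i $$ (q, a * dR i + r)" using i by simp
  also have "\<dots> = (if q div ?DR = off dL i + a \<and> q mod ?DR = off dR i + r then 1 else 0)"
    using q c i off_add_less_off[of i k r dR]
    by (simp add: kron_def incl_def less_mult_imp_div_less)
  also have "\<dots> = (if q = tensor_sum_pos k dL dR (i, a, r) then 1 else 0)"
    using mult_add_eq_iff_div_mod[OF off_add_less_off[where d = dR, OF i(1,3)], of q "off dL i + a"]
    by (simp add: tensor_sum_pos_def)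
  finally show ?thesis .
qed

interpretation split_incl: basis_embedding "split_incl k dL dR" "summand_basis k dL dR"
    "tensor_sum_pos k dL dR" "sum_tensor_pos dL dR"
  for k dL dR
proof
  show "bij_betw (sum_tensor_pos dL dR) (summand_basis k dL dR) {..<dim_col (split_incl k dL dR)}"
    using bij_betw_sum_tensor_pos by simp
  show "tensor_sum_pos k dL dR ` summand_basis k dL dR \<subseteq> {..<dim_row (split_incl k dL dR)}"
    using tensor_sum_pos_less by fastforce
qed (auto simp: inj_on_tensor_sum_pos split_incl_index)

lemma blockdiag_kron_index:
  assumes X: "\<And>i. i < k \<Longrightarrow> X i \<in> carrier_mat (dL i) (dL i)"
    and Y: "\<And>i. i < k \<Longrightarrow> Y i \<in> carrier_mat (dR i) (dR i)"
    and x: "(i, a, r) \<in> summand_basis k dL dR" and y: "(j, b, s) \<in> summand_basis k dL dR"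
  shows "blockdiag k (\<lambda>j. dL j * dR j) (\<lambda>i. kron (X i) (Y i)) $$
      (sum_tensor_pos dL dR (i, a, r), sum_tensor_pos dL dR (j, b, s)) =
    (if i = j then X i $$ (a, b) * Y i $$ (r, s) else 0)"
proof -
  have ij: "i < k" "a < dL i" "r < dR i" "j < k" "b < dL j" "s < dR j"
    using x y by (auto simp: summand_basis_def)
  have XY: "kron (X l) (Y l) \<in> carrier_mat (dL l * dR l) (dL l * dR l)" if "l < k" for l
    using kron_carrier[of "X l" "Y l"] X[OF that] Y[OF that] by simp
  have "a * dR i + r < dL i * dR i" "b * dR j + s < dL j * dR j"
    using ij by (simp_all add: mult_add_less_mult)
  then show ?thesis
    unfolding sum_tensor_pos_def
    using blockdiag_index[where d = "\<lambda>j. dL j * dR j" and i = i and j = j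
        and c = "a * dR i + r" and c' = "b * dR j + s", OF XY] ij
      kron_index[OF X[OF ij(1)] Y[OF ij(1)] ij(2) _ ij(3), of b s] by auto
qed

lemma kron_block_diagonal_commute_split_range:
  assumes A: "A \<in> carrier_mat (off dL k) (off dL k)" "block_diagonal k dL A"
    and B: "B \<in> carrier_mat (off dR k) (off dR k)" "block_diagonal k dR B"
  shows "kron A B * (split_incl k dL dR * adj (split_incl k dL dR)) =
    (split_incl k dL dR * adj (split_incl k dL dR)) * kron A B"
proof -
  let ?P = "tensor_sum_pos k dL dR ` summand_basis k dL dR"
  have K: "kron A B \<in> carrier_mat (off dL k * off dR k) (off dL k * off dR k)"
    using kron_carrier[of A B] A B by simp
  have "q \<in> ?P \<longleftrightarrow> q' \<in> ?P"
    if q: "q < off dL k * off dR k" and q': "q' < off dL k * off dR k"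
      and nz: "kron A B $$ (q, q') \<noteq> 0" for q q'
  proof -
    obtain i a j r where ij: "i < k" "a < dL i" "j < k" "r < dR j"
      and qe: "q = (off dL i + a) * off dR k + (off dR j + r)"
      using tensor_pos_cases[OF q] .
    obtain i' a' j' r' where ij': "i' < k" "a' < dL i'" "j' < k" "r' < dR j'"
      and qe': "q' = (off dL i' + a') * off dR k + (off dR j' + r')"
      using tensor_pos_cases[OF q'] .
    have "A $$ (off dL i + a, off dL i' + a') * B $$ (off dR j + r, off dR j' + r') \<noteq> 0"
      using nz ij ij' off_add_less_off[of _ k _ dL] off_add_less_off[of _ k _ dR]
        kron_index[OF A(1) B(1), of "off dL i + a" "off dL i' + a'" "off dR j + r" "off dR j' + r'"]
      unfolding qe qe' by simp
    then have "A $$ (off dL i + a, off dL i' + a') \<noteq> 0"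
      and "B $$ (off dR j + r, off dR j' + r') \<noteq> 0" by auto
    then have "i = i'" "j = j'"
      using A(2) B(2) ij ij' unfolding block_diagonal_def by blast+
    then show ?thesis
      unfolding qe qe' using tensor_pos_mem_split_range_iff ij ij' by simp
  qed
  then show ?thesis
    unfolding split_incl.range_projection using commute_mat_diag_indicator[OF K] by simp
qed

lemma compress_kron_split_incl:
  assumes A: "A \<in> carrier_mat (off dL k) (off dL k)" and B: "B \<in> carrier_mat (off dR k) (off dR k)"
    and diag: "block_diagonal k dL A \<or> block_diagonal k dR B"
  shows "adj (split_incl k dL dR) * kron A B * split_incl k dL dR =
    blockdiag k (\<lambda>j. dL j * dR j) (\<lambda>i. kron (diag_block dL A i) (diag_block dR B i))"
    (is "?L = ?R")
proof -
  let ?g = "sum_tensor_pos dL dR"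
  have K: "kron A B \<in> carrier_mat (off dL k * off dR k) (off dL k * off dR k)"
    using kron_carrier[of A B] A B by simp
  show ?thesis
  proof (rule split_incl.eq_matI_on_basis)
    fix x y assume x: "x \<in> summand_basis k dL dR" and y: "y \<in> summand_basis k dL dR"
    obtain i a r j b s where xy: "x = (i, a, r)" "y = (j, b, s)" by (cases x, cases y) auto
    have ij: "i < k" "a < dL i" "r < dR i" "j < k" "b < dL j" "s < dR j"
      using x y unfolding xy by (auto simp: summand_basis_def)
    have "?L $$ (?g x, ?g y) =
        A $$ (off dL i + a, off dL j + b) * B $$ (off dR i + r, off dR j + s)"
      using split_incl.compress_index[of "kron A B", OF _ x y] K
      by (simp add: xy tensor_sum_pos_def kron_index[OF A B] ij off_add_less_off[where d = dL]
          off_add_less_off[where d = dR])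
    also have "\<dots> = (if i = j then diag_block dL A i $$ (a, b) * diag_block dR B i $$ (r, s) else 0)"
      using diag ij by (auto simp: block_diagonal_def diag_block_def)
    also have "\<dots> = ?R $$ (?g x, ?g y)"
      unfolding xy
      by (rule blockdiag_kron_index[symmetric]) (use x y xy in \<open>auto simp: diag_block_def\<close>)
    finally show "?L $$ (?g x, ?g y) = ?R $$ (?g x, ?g y)" .
  qed (use K in \<open>auto intro!: mult_carrier_mat\<close>)
qed

section \<open>The commutant of \<open>\<Oplus>\<^sub>i L(H\<^sub>L\<^sup>i) \<otimes> 1\<close>\<close>

definition block_unit :: "nat \<Rightarrow> (nat \<Rightarrow> nat) \<Rightarrow> (nat \<Rightarrow> nat) \<Rightarrow> nat \<Rightarrow> nat \<Rightarrow> nat \<Rightarrow> complex mat" where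
  "block_unit k dL dR j a b = blockdiag k (\<lambda>l. dL l * dR l) (\<lambda>l. kron
     (mat (dL l) (dL l) (\<lambda>(u, v). if l = j \<and> u = a \<and> v = b then 1 else 0)) (1\<^sub>m (dR l)))"

lemma block_unit_carrier [simp]:
  "block_unit k dL dR j a b \<in> carrier_mat (off (\<lambda>l. dL l * dR l) k) (off (\<lambda>l. dL l * dR l) k)"
  by (simp add: block_unit_def)

lemma block_unit_index:
  assumes "(l, u, t) \<in> summand_basis k dL dR" "(l', v, t') \<in> summand_basis k dL dR"
  shows "block_unit k dL dR j a b $$
      (sum_tensor_pos dL dR (l, u, t), sum_tensor_pos dL dR (l', v, t')) =
    (if l = j \<and> l' = j \<and> u = a \<and> v = b \<and> t = t' then 1 else 0)"
  unfolding block_unit_def using assms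
  by (subst blockdiag_kron_index[OF _ one_carrier_mat assms]) (auto simp: summand_basis_def)

lemma mult_block_unit_index:
  assumes C: "C \<in> carrier_mat (off (\<lambda>l. dL l * dR l) k) (off (\<lambda>l. dL l * dR l) k)"
    and x: "x \<in> summand_basis k dL dR" and y: "(j, a, s) \<in> summand_basis k dL dR" and b: "b < dL j"
  shows "(C * block_unit k dL dR j a b) $$
      (sum_tensor_pos dL dR x, sum_tensor_pos dL dR (j, b, s)) =
    C $$ (sum_tensor_pos dL dR x, sum_tensor_pos dL dR (j, a, s))"
proof (rule index_mult_unit_col[OF C block_unit_carrier])
  have "(j, b, s) \<in> summand_basis k dL dR" using y b by (simp add: summand_basis_def)
  then show "sum_tensor_pos dL dR (j, b, s) < off (\<lambda>l. dL l * dR l) k"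
    by (rule split_incl.col_less[simplified])
  fix t assume "t < off (\<lambda>l. dL l * dR l) k"
  then obtain z where z: "z \<in> summand_basis k dL dR" "t = sum_tensor_pos dL dR z"
    using sum_tensor_pos_cases by blast
  show "block_unit k dL dR j a b $$ (t, sum_tensor_pos dL dR (j, b, s)) =
      (if t = sum_tensor_pos dL dR (j, a, s) then 1 else 0)"
    using z block_unit_index[OF _ \<open>(j, b, s) \<in> summand_basis k dL dR\<close>]
      split_incl.col_inj[OF _ y] by (cases z) auto
qed (use x y split_incl.col_less in auto)

lemma block_unit_mult_index:
  assumes C: "C \<in> carrier_mat (off (\<lambda>l. dL l * dR l) k) (off (\<lambda>l. dL l * dR l) k)"
    and x: "(i, c, r) \<in> summand_basis k dL dR" and y: "y \<in> summand_basis k dL dR" and b: "b < dL j"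
  shows "(block_unit k dL dR j a b * C) $$
      (sum_tensor_pos dL dR (i, c, r), sum_tensor_pos dL dR y) =
    (if i = j \<and> c = a then C $$ (sum_tensor_pos dL dR (j, b, r), sum_tensor_pos dL dR y) else 0)"
proof (cases "i = j \<and> c = a")
  case True
  then have jbr: "(j, b, r) \<in> summand_basis k dL dR" using x b by (simp add: summand_basis_def)
  have "(block_unit k dL dR j a b * C) $$ (sum_tensor_pos dL dR (i, c, r), sum_tensor_pos dL dR y) =
      C $$ (sum_tensor_pos dL dR (j, b, r), sum_tensor_pos dL dR y)"
  proof (rule index_mult_unit_row[OF block_unit_carrier C])
    fix t assume "t < off (\<lambda>l. dL l * dR l) k"
    then obtain z where z: "z \<in> summand_basis k dL dR" "t = sum_tensor_pos dL dR z"
      using sum_tensor_pos_cases by blast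
    show "block_unit k dL dR j a b $$ (sum_tensor_pos dL dR (i, c, r), t) =
        (if t = sum_tensor_pos dL dR (j, b, r) then 1 else 0)"
      using z block_unit_index[OF x] split_incl.col_inj[OF _ jbr] True by (cases z) auto
  qed (use x y jbr split_incl.col_less in auto)
  then show ?thesis using True by simp
next
  case False
  have "block_unit k dL dR j a b $$ (sum_tensor_pos dL dR (i, c, r), t) = 0"
    if "t < off (\<lambda>l. dL l * dR l) k" for t
  proof -
    obtain z where "z \<in> summand_basis k dL dR" "t = sum_tensor_pos dL dR z"
      using sum_tensor_pos_cases \<open>t < off (\<lambda>l. dL l * dR l) k\<close> by blast
    then show ?thesis using block_unit_index[OF x] False by (cases z) auto
  qed
  then have "(block_unit k dL dR j a b * C) $$
      (sum_tensor_pos dL dR (i, c, r), sum_tensor_pos dL dR y) = 0"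
    using C split_incl.col_less[OF x] split_incl.col_less[OF y]
      carrier_matD[OF block_unit_carrier[of k dL dR j a b]]
    by (auto simp: index_mult_mat scalar_prod_def intro!: sum.neutral)
  then show ?thesis using False by (simp only: if_False)
qed

lemma commutant_blockdiag_kron_one_index:
  fixes C :: "complex mat" and dL dR :: "nat \<Rightarrow> nat"
  defines "d \<equiv> \<lambda>j. dL j * dR j"
  assumes C: "C \<in> carrier_mat (off d k) (off d k)"
    and comm: "\<And>X. (\<And>i. i < k \<Longrightarrow> X i \<in> carrier_mat (dL i) (dL i)) \<Longrightarrow>
       C * blockdiag k d (\<lambda>i. kron (X i) (1\<^sub>m (dR i))) =
         blockdiag k d (\<lambda>i. kron (X i) (1\<^sub>m (dR i))) * C"
    and x: "(i, a, r) \<in> summand_basis k dL dR" and y: "(j, a', s) \<in> summand_basis k dL dR"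
    and b: "b < dL j"
  shows "C $$ (sum_tensor_pos dL dR (i, a, r), sum_tensor_pos dL dR (j, a', s)) =
    (if i = j \<and> a = a'
     then C $$ (sum_tensor_pos dL dR (j, b, r), sum_tensor_pos dL dR (j, b, s)) else 0)"
proof -
  have "(j, b, s) \<in> summand_basis k dL dR" using y b by (simp add: summand_basis_def)
  moreover have "C * block_unit k dL dR j a' b = block_unit k dL dR j a' b * C"
    unfolding block_unit_def d_def[symmetric] by (rule comm) simp
  ultimately show ?thesis
    using mult_block_unit_index[OF C[unfolded d_def] x y b]
      block_unit_mult_index[OF C[unfolded d_def] x, of "(j, b, s)" b j a'] b by simp
qed

lemma commutant_blockdiag_kron_one:
  fixes C :: "complex mat" and dL dR :: "nat \<Rightarrow> nat"
  defines "d \<equiv> \<lambda>j. dL j * dR j"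
  assumes C: "C \<in> carrier_mat (off d k) (off d k)"
    and comm: "\<And>X. (\<And>i. i < k \<Longrightarrow> X i \<in> carrier_mat (dL i) (dL i)) \<Longrightarrow>
       C * blockdiag k d (\<lambda>i. kron (X i) (1\<^sub>m (dR i))) =
         blockdiag k d (\<lambda>i. kron (X i) (1\<^sub>m (dR i))) * C"
  obtains Y where "\<And>i. i < k \<Longrightarrow> Y i \<in> carrier_mat (dR i) (dR i)"
    and "C = blockdiag k d (\<lambda>i. kron (1\<^sub>m (dL i)) (Y i))"
proof
  let ?g = "sum_tensor_pos dL dR"
  define Y where "Y i = mat (dR i) (dR i) (\<lambda>(r, s). C $$ (?g (i, 0, r), ?g (i, 0, s)))" for i
  show Y: "Y i \<in> carrier_mat (dR i) (dR i)" for i by (simp add: Y_def)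
  show "C = blockdiag k d (\<lambda>i. kron (1\<^sub>m (dL i)) (Y i))"
  proof (rule split_incl.eq_matI_on_basis)
    fix x y assume x: "x \<in> summand_basis k dL dR" and y: "y \<in> summand_basis k dL dR"
    obtain i a r j b s where xy: "x = (i, a, r)" "y = (j, b, s)" by (cases x, cases y) auto
    have x': "(i, a, r) \<in> summand_basis k dL dR" and y': "(j, b, s) \<in> summand_basis k dL dR"
      using x y xy by simp_all
    then have "0 < dL j" "r < dR i" "s < dR j" by (auto simp: summand_basis_def)
    have "blockdiag k d (\<lambda>i. kron (1\<^sub>m (dL i)) (Y i)) $$ (?g (i, a, r), ?g (j, b, s)) =
        (if i = j then 1\<^sub>m (dL i) $$ (a, b) * Y i $$ (r, s) else 0)"
      unfolding d_def by (rule blockdiag_kron_index) (use x' y' Y in auto)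
    then show "C $$ (?g x, ?g y) = blockdiag k d (\<lambda>i. kron (1\<^sub>m (dL i)) (Y i)) $$ (?g x, ?g y)"
      using commutant_blockdiag_kron_one_index[OF C[unfolded d_def] comm[unfolded d_def] x' y'
          \<open>0 < dL j\<close>]
        x' y' \<open>r < dR i\<close> \<open>s < dR j\<close>
      unfolding xy by (auto simp: Y_def summand_basis_def)
  qed (use C in \<open>simp_all add: d_def\<close>)
qed

section \<open>The splitting map of a representation unitary\<close>

locale represented_algebra =
  fixes n k :: nat and dL dR :: "nat \<Rightarrow> nat" and \<A> :: "complex mat set" and U :: "complex mat"
  assumes algebra_carrier: "\<A> \<subseteq> carrier_mat n n"
    and rep: "rep_unitary n \<A> k dL dR U"
begin

abbreviation "d \<equiv> \<lambda>j. dL j * dR j"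
abbreviation "nL \<equiv> off dL k"
abbreviation "nR \<equiv> off dR k"
abbreviation "S \<equiv> split_incl k dL dR"
abbreviation "\<chi> \<equiv> chi_U k dL dR U"

lemma U_carrier: "U \<in> carrier_mat (off d k) n"
  and U_isometry: "adj U * U = 1\<^sub>m n"
  and U_coisometry: "U * adj U = 1\<^sub>m (off d k)"
  and conj_image: "(\<lambda>A. U * A * adj U) ` \<A> =
    {blockdiag k d (\<lambda>i. kron (X i) (1\<^sub>m (dR i))) | X. \<forall>i<k. X i \<in> carrier_mat (dL i) (dL i)}"
  using rep unfolding rep_unitary_def off_def Let_def by auto

lemma S_carrier: "S \<in> carrier_mat (nL * nR) (off d k)"
  by (rule split_incl_carrier)

lemma adj_U_carrier: "adj U \<in> carrier_mat n (off d k)"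
  using U_carrier by simp

lemma adj_S_carrier: "adj S \<in> carrier_mat (off d k) (nL * nR)"
  using S_carrier by simp

lemma chi_carrier: "\<chi> \<in> carrier_mat (nL * nR) n"
  unfolding chi_U_def using S_carrier U_carrier by (rule mult_carrier_mat)

lemma chi_isometry: "adj \<chi> * \<chi> = 1\<^sub>m n"
proof -
  have "adj \<chi> * \<chi> = adj U * adj S * (S * U)"
    unfolding chi_U_def using adj_mult[OF S_carrier U_carrier] by simp
  also have "\<dots> = adj U * ((adj S * S) * U)"
    by (simp add: assoc_mult_mat[OF adj_S_carrier S_carrier U_carrier]
        assoc_mult_mat[OF adj_U_carrier adj_S_carrier mult_carrier_mat[OF S_carrier U_carrier]])
  finally show ?thesis using split_incl.isometry U_carrier U_isometry by simp
qed

lemma splitting: "splitting_map n nL nR \<chi>"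
  unfolding splitting_map_def using chi_carrier chi_isometry by blast

lemma chi_range_projection: "\<chi> * adj \<chi> = S * adj S"
proof -
  have "\<chi> * adj \<chi> = S * U * (adj U * adj S)"
    unfolding chi_U_def using adj_mult[OF S_carrier U_carrier] by simp
  also have "\<dots> = S * ((U * adj U) * adj S)"
    by (simp add: assoc_mult_mat[OF U_carrier adj_U_carrier adj_S_carrier]
        assoc_mult_mat[OF S_carrier U_carrier mult_carrier_mat[OF adj_U_carrier adj_S_carrier]])
  finally show ?thesis using U_coisometry adj_S_carrier by simp
qed

lemma compress_chi:
  assumes K: "K \<in> carrier_mat (nL * nR) (nL * nR)"
  shows "adj \<chi> * K * \<chi> = adj U * (adj S * K * S) * U"
proof -
  have "adj \<chi> * K * \<chi> = adj U * adj S * K * (S * U)"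
    unfolding chi_U_def using adj_mult[OF S_carrier U_carrier] by simp
  also have "\<dots> = adj U * (adj S * K) * (S * U)"
    using assoc_mult_mat[OF adj_U_carrier adj_S_carrier K] by simp
  also have "\<dots> = adj U * (adj S * K) * S * U"
    using assoc_mult_mat[OF mult_carrier_mat[OF adj_U_carrier mult_carrier_mat[OF adj_S_carrier K]]
        S_carrier U_carrier] by simp
  also have "\<dots> = adj U * (adj S * K * S) * U"
    using assoc_mult_mat[OF adj_U_carrier mult_carrier_mat[OF adj_S_carrier K] S_carrier] by simp
  finally show ?thesis .
qed

lemma strictly_local_of_compression:
  assumes K: "K \<in> carrier_mat (nL * nR) (nL * nR)" and comm: "K * (S * adj S) = (S * adj S) * K"
    and A: "A \<in> carrier_mat n n" and conj: "U * A * adj U = adj S * K * S"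
  shows "A * adj \<chi> = adj \<chi> * K" and "\<chi> * A = K * \<chi>"
proof -
  have "adj \<chi> * K * \<chi> = A"
    unfolding compress_chi[OF K] conj[symmetric]
    using unitary_conj_cancel[OF U_carrier U_isometry A] .
  moreover note isometry_compression_intertwines[OF chi_carrier chi_isometry K]
  ultimately show "A * adj \<chi> = adj \<chi> * K" and "\<chi> * A = K * \<chi>"
    using comm unfolding chi_range_projection by simp_all
qed

lemma algebra_subset_stloc_L: "\<A> \<subseteq> stloc_L n nL nR \<chi>"
proof
  fix A assume "A \<in> \<A>"
  then have A: "A \<in> carrier_mat n n" using algebra_carrier by blast
  obtain X where X: "\<And>i. i < k \<Longrightarrow> X i \<in> carrier_mat (dL i) (dL i)"
    and conj: "U * A * adj U = blockdiag k d (\<lambda>i. kron (X i) (1\<^sub>m (dR i)))"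
    using conj_image \<open>A \<in> \<A>\<close> by blast
  let ?T = "blockdiag k dL X"
  have T: "?T \<in> carrier_mat nL nL" by simp
  have K: "kron ?T (1\<^sub>m nR) \<in> carrier_mat (nL * nR) (nL * nR)"
    using kron_carrier[of ?T "1\<^sub>m nR"] by simp
  have "adj S * kron ?T (1\<^sub>m nR) * S = blockdiag k d (\<lambda>i. kron (X i) (1\<^sub>m (dR i)))"
    using compress_kron_split_incl[OF T one_carrier_mat] block_diagonal_one
      diag_block_blockdiag[OF X] diag_block_one by (auto intro!: blockdiag_cong)
  moreover have "kron ?T (1\<^sub>m nR) * (S * adj S) = (S * adj S) * kron ?T (1\<^sub>m nR)"
    using kron_block_diagonal_commute_split_range[OF T block_diagonal_blockdiag[OF X]
        one_carrier_mat block_diagonal_one] .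
  ultimately show "A \<in> stloc_L n nL nR \<chi>"
    using strictly_local_of_compression[OF K _ A] conj T A unfolding stloc_L_def by auto
qed

lemma loc_L_subset_algebra: "loc_L n nL nR \<chi> \<subseteq> \<A>"
proof
  fix A assume "A \<in> loc_L n nL nR \<chi>"
  then obtain T where T: "T \<in> carrier_mat nL nL" and A: "A = adj \<chi> * kron T (1\<^sub>m nR) * \<chi>"
    unfolding loc_L_def by blast
  have K: "kron T (1\<^sub>m nR) \<in> carrier_mat (nL * nR) (nL * nR)"
    using kron_carrier[of T "1\<^sub>m nR"] T by simp
  have "adj S * kron T (1\<^sub>m nR) * S = blockdiag k d (\<lambda>i. kron (diag_block dL T i) (1\<^sub>m (dR i)))"
    using compress_kron_split_incl[OF T one_carrier_mat] block_diagonal_one diag_block_one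
    by (auto intro!: blockdiag_cong)
  also have "\<dots> \<in> (\<lambda>A. U * A * adj U) ` \<A>"
    unfolding conj_image by (auto simp: diag_block_def)
  finally obtain A' where "A' \<in> \<A>" and conj: "U * A' * adj U = adj S * kron T (1\<^sub>m nR) * S"
    by (auto elim!: imageE)
  have "A = adj U * (U * A' * adj U) * U"
    unfolding A compress_chi[OF K] conj ..
  also have "\<dots> = A'"
    using unitary_conj_cancel[OF U_carrier U_isometry] algebra_carrier \<open>A' \<in> \<A>\<close> by blast
  finally show "A \<in> \<A>" using \<open>A' \<in> \<A>\<close> by simp
qed

lemma loc_R_subset_commutant: "loc_R n nL nR \<chi> \<subseteq> commutant n \<A>"
proof
  fix B assume "B \<in> loc_R n nL nR \<chi>"
  then obtain R where B: "B \<in> carrier_mat n n" and R: "R \<in> carrier_mat nR nR"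
    and B_eq: "B = adj \<chi> * kron (1\<^sub>m nL) R * \<chi>"
    unfolding loc_R_def by blast
  have "A * B = B * A" if "A \<in> \<A>" for A
  proof -
    obtain T where T: "T \<in> carrier_mat nL nL"
      and right: "A * adj \<chi> = adj \<chi> * kron T (1\<^sub>m nR)" and left: "\<chi> * A = kron T (1\<^sub>m nR) * \<chi>"
      using algebra_subset_stloc_L \<open>A \<in> \<A>\<close> unfolding stloc_L_def by blast
    have "A \<in> carrier_mat n n" using algebra_carrier \<open>A \<in> \<A>\<close> by blast
    moreover have "kron T (1\<^sub>m nR) \<in> carrier_mat (nL * nR) (nL * nR)"
      and "kron (1\<^sub>m nL) R \<in> carrier_mat (nL * nR) (nL * nR)"
      using kron_carrier[of T "1\<^sub>m nR"] kron_carrier[of "1\<^sub>m nL" R] T R by simp_all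
    ultimately show ?thesis
      unfolding B_eq using strictly_local_commute[OF chi_carrier _ _ _ right left] kron_one_commute[OF T R]
      by blast
  qed
  then show "B \<in> commutant n \<A>" unfolding commutant_def using B by blast
qed

lemma conj_commutant_commute:
  assumes B: "B \<in> commutant n \<A>" and X: "\<And>i. i < k \<Longrightarrow> X i \<in> carrier_mat (dL i) (dL i)"
  shows "(U * B * adj U) * blockdiag k d (\<lambda>i. kron (X i) (1\<^sub>m (dR i))) =
    blockdiag k d (\<lambda>i. kron (X i) (1\<^sub>m (dR i))) * (U * B * adj U)"
proof -
  have "blockdiag k d (\<lambda>i. kron (X i) (1\<^sub>m (dR i))) \<in> (\<lambda>A. U * A * adj U) ` \<A>"
    unfolding conj_image using X by blast
  then obtain A where "A \<in> \<A>"
    and conj: "U * A * adj U = blockdiag k d (\<lambda>i. kron (X i) (1\<^sub>m (dR i)))"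
    by (auto elim!: imageE)
  moreover have "A \<in> carrier_mat n n" "B \<in> carrier_mat n n" and "A * B = B * A"
    using algebra_carrier B \<open>A \<in> \<A>\<close> unfolding commutant_def by auto
  ultimately show ?thesis
    unfolding conj[symmetric] by (simp add: unitary_conj_mult[OF U_carrier U_isometry])
qed

lemma commutant_subset_stloc_R: "commutant n \<A> \<subseteq> stloc_R n nL nR \<chi>"
proof
  fix B assume "B \<in> commutant n \<A>"
  then have B: "B \<in> carrier_mat n n" unfolding commutant_def by auto
  define C where "C = U * B * adj U"
  have C: "C \<in> carrier_mat (off d k) (off d k)"
    unfolding C_def using U_carrier B by (auto intro!: mult_carrier_mat)
  then obtain Y where Y: "\<And>i. i < k \<Longrightarrow> Y i \<in> carrier_mat (dR i) (dR i)"
    and C_eq: "C = blockdiag k d (\<lambda>i. kron (1\<^sub>m (dL i)) (Y i))"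
    using commutant_blockdiag_kron_one[OF C] conj_commutant_commute[OF \<open>B \<in> commutant n \<A>\<close>]
    unfolding C_def by blast
  let ?R = "blockdiag k dR Y"
  have R: "?R \<in> carrier_mat nR nR" by simp
  have K: "kron (1\<^sub>m nL) ?R \<in> carrier_mat (nL * nR) (nL * nR)"
    using kron_carrier[of "1\<^sub>m nL" ?R] by simp
  have "adj S * kron (1\<^sub>m nL) ?R * S = C"
    unfolding C_eq using compress_kron_split_incl[OF one_carrier_mat R] block_diagonal_one
      diag_block_blockdiag[OF Y] diag_block_one by (auto intro!: blockdiag_cong)
  moreover have "kron (1\<^sub>m nL) ?R * (S * adj S) = (S * adj S) * kron (1\<^sub>m nL) ?R"
    using kron_block_diagonal_commute_split_range[OF one_carrier_mat block_diagonal_one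
        R block_diagonal_blockdiag[OF Y]] .
  ultimately show "B \<in> stloc_R n nL nR \<chi>"
    using strictly_local_of_compression[OF K _ B] R B unfolding stloc_R_def C_def by auto
qed

end

theorem mainTheorem10:
  fixes n k :: nat and dL dR :: "nat \<Rightarrow> nat" and \<A> :: "complex mat set" and U :: "complex mat"
  assumes "vN_algebra n \<A>"
    and "rep_unitary n \<A> k dL dR U"
  shows "let nL = (\<Sum>i<k. dL i); nR = (\<Sum>i<k. dR i); \<chi> = chi_U k dL dR U in
     splitting_map n nL nR \<chi> \<and>
     stloc_L n nL nR \<chi> = \<A> \<and> loc_L n nL nR \<chi> = \<A> \<and>
     stloc_R n nL nR \<chi> = commutant n \<A> \<and> loc_R n nL nR \<chi> = commutant n \<A>"
proof -
  interpret represented_algebra n k dL dR \<A> U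
    using assms by unfold_locales (simp_all add: vN_algebra_def)
  have sums: "(\<Sum>i<k. dL i) = nL" "(\<Sum>i<k. dR i) = nR" by (simp_all add: off_def)
  show ?thesis
    unfolding Let_def sums
    using splitting stloc_L_subset_loc_L[OF splitting] stloc_R_subset_loc_R[OF splitting]
      algebra_subset_stloc_L loc_L_subset_algebra loc_R_subset_commutant commutant_subset_stloc_R
    by blast
qed

end
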